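(* Let $n\ge 1$ and let $A$ be a distributive meet-complemented lattice in which $\Box x$ and $\Diamond x$ exist for every $x\in A$ and such that $\Box^{n+1}a=\Box^n a$ for all $a\in A$. Then for every $a\in A$ the set $\{b\in A: b\le a \text{ and } b\vee\neg b=1\}$ has a maximum $Ba$, and $Ba=\Box^n a$.
   Context: A meet-complemented lattice is a lattice $(L,\le)$ such that for every $a\in L$ the element $\neg a=\max\{b\in L: a\wedge b\le c\ \text{for all } c\in L\}$ exists; it is bounded with bottom $0$ and top $1$. For $a\in L$, $\Box a=\max\{b\in L: a\vee\neg b=1\}$ and $\Diamond a=\min\{b\in L: \neg a\vee b=1\}$; $\Box^n$ is the $n$-fold composite of $\Box$. $Ba$ denotes the greatest Boolean element (element $b$ with $b\vee\neg b=1$) below $a$. *)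

theory Defs
  imports Main
begin

(* Lattices are modelled as types of class bounded_lattice (a meet-complemented
   lattice is automatically bounded); distributivity is the class distrib_lattice. *)

definition is_max :: "'a::order set \<Rightarrow> 'a \<Rightarrow> bool" where
  "is_max S m \<longleftrightarrow> m \<in> S \<and> (\<forall>x\<in>S. x \<le> m)"

definition is_min :: "'a::order set \<Rightarrow> 'a \<Rightarrow> bool" where
  "is_min S m \<longleftrightarrow> m \<in> S \<and> (\<forall>x\<in>S. m \<le> x)"

definition negset :: "'a::bounded_lattice \<Rightarrow> 'a set" where
  "negset a = {b. \<forall>c. inf a b \<le> c}"

definition meet_complemented :: "'a::bounded_lattice itself \<Rightarrow> bool" where
  "meet_complemented _ \<longleftrightarrow> (\<forall>a::'a. \<exists>m. is_max (negset a) m)"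

definition neg :: "'a::bounded_lattice \<Rightarrow> 'a" where
  "neg a = (THE m. is_max (negset a) m)"

definition boxset :: "'a::bounded_lattice \<Rightarrow> 'a set" where
  "boxset a = {b. sup a (neg b) = top}"

definition diaset :: "'a::bounded_lattice \<Rightarrow> 'a set" where
  "diaset a = {b. sup (neg a) b = top}"

definition box :: "'a::bounded_lattice \<Rightarrow> 'a" where
  "box a = (THE m. is_max (boxset a) m)"

definition dia :: "'a::bounded_lattice \<Rightarrow> 'a" where
  "dia a = (THE m. is_min (diaset a) m)"

definition boolbelow :: "'a::bounded_lattice \<Rightarrow> 'a set" where
  "boolbelow a = {b. b \<le> a \<and> sup b (neg b) = top}"

definition Bgr :: "'a::bounded_lattice \<Rightarrow> 'a" where
  "Bgr a = (THE m. is_max (boolbelow a) m)"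

end

theory Submission
  imports Defs
begin

text \<open>Whenever \<open>\<box>\<close> exists, \<open>b \<or> \<not>b = 1\<close> with \<open>b \<le> x\<close> gives \<open>x \<or> \<not>b = 1\<close>, so every
  Boolean element below \<open>a\<close> lies below every \<open>\<box>\<^sup>k a\<close>; conversely \<open>\<box>x \<le> x\<close> by distributivity.
  A fixed point \<open>c = \<box>c\<close> satisfies \<open>c \<or> \<not>c = c \<or> \<not>\<box>c = 1\<close>, so \<open>\<box>\<^sup>n a\<close> is itself Boolean
  and is the greatest Boolean element below \<open>a\<close>.\<close>

lemma is_max_unique: "is_max S m \<Longrightarrow> is_max S m' \<Longrightarrow> m = (m'::'a::order)"
  unfolding is_max_def by (meson order.antisym)

lemma is_max_The: "\<exists>m. is_max S m \<Longrightarrow> is_max S (THE m. is_max S (m::'a::order))"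
  by (metis is_max_unique theI)

lemma inf_neg_eq_bot:
  assumes "meet_complemented TYPE('a::bounded_lattice)"
  shows "inf (b::'a) (neg b) = bot"
proof -
  have "is_max (negset b) (neg b)"
    using assms unfolding meet_complemented_def neg_def by (intro is_max_The) blast
  then have "inf b (neg b) \<le> bot" unfolding is_max_def negset_def by blast
  then show ?thesis by (simp add: bot_unique)
qed

lemma le_if_sup_neg_eq_top:
  assumes "meet_complemented TYPE('a::{bounded_lattice, distrib_lattice})"
    and "sup x (neg y) = (top::'a)"
  shows "y \<le> x"
proof -
  have "y = inf y (sup x (neg y))" using assms(2) by simp
  also have "\<dots> = sup (inf y x) (inf y (neg y))" by (rule inf_sup_distrib1)
  also have "\<dots> = inf y x" using inf_neg_eq_bot[OF assms(1)] by simp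
  finally show ?thesis by (metis inf.absorb_iff1 inf_commute)
qed

lemma box_is_max:
  "\<exists>m. is_max (boxset x) m \<Longrightarrow> is_max (boxset x) (box (x::'a::bounded_lattice))"
  unfolding box_def by (rule is_max_The)

lemma sup_neg_box_eq_top:
  "\<exists>m. is_max (boxset x) m \<Longrightarrow> sup x (neg (box x)) = (top::'a::bounded_lattice)"
  using box_is_max unfolding is_max_def boxset_def by blast

lemma le_box_if_sup_neg_eq_top:
  "\<exists>m. is_max (boxset x) m \<Longrightarrow> sup x (neg y) = top \<Longrightarrow> y \<le> box (x::'a::bounded_lattice)"
  using box_is_max unfolding is_max_def boxset_def by blast

lemma box_le:
  assumes "meet_complemented TYPE('a::{bounded_lattice, distrib_lattice})"
    and "\<exists>m. is_max (boxset x) m"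
  shows "box x \<le> (x::'a)"
  using le_if_sup_neg_eq_top[OF assms(1) sup_neg_box_eq_top[OF assms(2)]] .

lemma funpow_box_le:
  assumes "meet_complemented TYPE('a::{bounded_lattice, distrib_lattice})"
    and "\<forall>x::'a. \<exists>m. is_max (boxset x) m"
  shows "(box ^^ k) x \<le> (x::'a)"
  by (induction k) (auto intro: order_trans[OF box_le[OF assms(1)]] simp: assms(2))

lemma boolean_le_funpow_box:
  assumes "\<forall>x::'a. \<exists>m. is_max (boxset x) m"
    and "b \<le> x" and "sup b (neg b) = (top::'a::bounded_lattice)"
  shows "b \<le> (box ^^ k) x"
proof (induction k)
  case 0
  then show ?case using assms(2) by simp
next
  case (Suc k)
  have "sup b (neg b) \<le> sup ((box ^^ k) x) (neg b)"
    using Suc.IH by (intro sup_mono) simp_all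
  then have "sup ((box ^^ k) x) (neg b) = top" using assms(3) by (simp add: top_unique)
  with assms(1) show ?case by (simp add: le_box_if_sup_neg_eq_top)
qed

lemma boolean_if_box_fixed:
  "\<exists>m. is_max (boxset c) m \<Longrightarrow> box c = c \<Longrightarrow> sup c (neg c) = (top::'a::bounded_lattice)"
  using sup_neg_box_eq_top by metis

lemma is_max_boolbelow_funpow_box:
  assumes "meet_complemented TYPE('a::{bounded_lattice, distrib_lattice})"
    and "\<forall>x::'a. \<exists>m. is_max (boxset x) m"
    and "box ((box ^^ n) a) = (box ^^ n) (a::'a)"
  shows "is_max (boolbelow a) ((box ^^ n) a)"
  unfolding is_max_def boolbelow_def
  using boolean_if_box_fixed[OF _ assms(3)] assms(2) funpow_box_le[OF assms(1,2)]
    boolean_le_funpow_box[OF assms(2)] by blast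

lemma Bgr_eqI: "is_max (boolbelow a) m \<Longrightarrow> Bgr a = m"
  unfolding Bgr_def by (metis is_max_The is_max_unique)

theorem proposition25:
  fixes n :: nat
  assumes "n \<ge> 1"
    and "meet_complemented TYPE('a::{bounded_lattice, distrib_lattice})"
    and "\<forall>x::'a. \<exists>m. is_max (boxset x) m"
    and "\<forall>x::'a. \<exists>m. is_min (diaset x) m"
    and "\<forall>a::'a. (box ^^ (n + 1)) a = (box ^^ n) a"
  shows "\<forall>a::'a. (\<exists>m. is_max (boolbelow a) m) \<and> Bgr a = (box ^^ n) a"
proof
  fix a :: 'a
  have "box ((box ^^ n) a) = (box ^^ n) a" using assms(5) by simp
  then have "is_max (boolbelow a) ((box ^^ n) a)"
    using is_max_boolbelow_funpow_box[OF assms(2,3)] by blast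
  then show "(\<exists>m. is_max (boolbelow a) m) \<and> Bgr a = (box ^^ n) a"
    using Bgr_eqI by blast
qed

end
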